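(* Let $E,E'$ be Stone spaces and let $\Phi\colon\mathscr{C}(E)\to\mathscr{C}(E')$ be a graph isomorphism. Then for every pants decomposition $\Gamma$ of $E$, the set $\Phi(\Gamma)$ is a pants decomposition of $E'$, and $\Phi$ restricts to a graph isomorphism $A(\Gamma)\to A(\Phi(\Gamma))$.
   Context: A Stone space is a compact, Hausdorff, totally disconnected space. A cut of $E$ is an unordered partition of $E$ into two disjoint clopen sets $U,V$, written $U\sqcup V$; it is non-peripheral if each of $U,V$ contains at least two points. Two cuts $U\sqcup V$, $U'\sqcup V'$ cross if all four sets $U\cap U'$, $U\cap V'$, $V\cap U'$, $V\cap V'$ are nonempty; otherwise they are compatible. The complex of cuts $\mathscr{C}(E)$ is the simplicial graph whose vertices are the non-peripheral cuts, with edges between distinct compatible cuts. A pants decomposition of $E$ is a countable collection $\Gamma$ of non-peripheral cuts such that: (1) any two cuts in $\Gamma$ are compatible; (2) every non-peripheral cut $\gamma\notin\Gamma$ crosses some cut of $\Gamma$; (3) every non-peripheral cut $\gamma\notin\Gamma$ crosses only finitely many cuts of $\Gamma$. Two cuts $\gamma_i,\gamma_j\in\Gamma$ are adjacent in $\Gamma$ if there is a non-peripheral cut $\gamma$ crossing $\gamma_i$ and $\gamma_j$ and no other cut of $\Gamma$. The adjacency graph $A(\Gamma)$ is the simplicial graph with vertex set $\Gamma$ and an edge between $\gamma_i$ and $\gamma_j$ whenever they are adjacent in $\Gamma$. *)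

theory Defs
  imports "HOL-Analysis.Analysis"
begin

definition totally_disconnected_space :: "'a topology \<Rightarrow> bool" where
  "totally_disconnected_space X \<longleftrightarrow>
     (\<forall>S. S \<subseteq> topspace X \<and> connectedin X S \<longrightarrow> (\<forall>x\<in>S. \<forall>y\<in>S. x = y))"

definition stone_space :: "'a topology \<Rightarrow> bool" where
  "stone_space X \<longleftrightarrow> compact_space X \<and> Hausdorff_space X \<and> totally_disconnected_space X"

definition clopenin :: "'a topology \<Rightarrow> 'a set \<Rightarrow> bool" where
  "clopenin X U \<longleftrightarrow> openin X U \<and> closedin X U"

definition nonperipheral_cut :: "'a topology \<Rightarrow> 'a set set \<Rightarrow> bool" where
  "nonperipheral_cut X c \<longleftrightarrow> (\<exists>U V. c = {U, V} \<and> clopenin X U \<and> clopenin X V \<and>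
       U \<inter> V = {} \<and> U \<union> V = topspace X \<and>
       (\<exists>a b. a \<in> U \<and> b \<in> U \<and> a \<noteq> b) \<and> (\<exists>a b. a \<in> V \<and> b \<in> V \<and> a \<noteq> b))"

definition cut_vertices :: "'a topology \<Rightarrow> 'a set set set" where
  "cut_vertices X = {c. nonperipheral_cut X c}"

definition cuts_cross :: "'a set set \<Rightarrow> 'a set set \<Rightarrow> bool" where
  "cuts_cross c d \<longleftrightarrow> (\<forall>A\<in>c. \<forall>B\<in>d. A \<inter> B \<noteq> {})"

definition cut_edge :: "'a topology \<Rightarrow> 'a set set \<Rightarrow> 'a set set \<Rightarrow> bool" where
  "cut_edge X c d \<longleftrightarrow> c \<in> cut_vertices X \<and> d \<in> cut_vertices X \<and> c \<noteq> d \<and> \<not> cuts_cross c d"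

definition cut_complex_iso ::
    "'a topology \<Rightarrow> 'b topology \<Rightarrow> ('a set set \<Rightarrow> 'b set set) \<Rightarrow> bool" where
  "cut_complex_iso X Y \<Phi> \<longleftrightarrow> bij_betw \<Phi> (cut_vertices X) (cut_vertices Y) \<and>
     (\<forall>c\<in>cut_vertices X. \<forall>d\<in>cut_vertices X. cut_edge X c d \<longleftrightarrow> cut_edge Y (\<Phi> c) (\<Phi> d))"

definition pants_decomposition :: "'a topology \<Rightarrow> 'a set set set \<Rightarrow> bool" where
  "pants_decomposition X \<Gamma> \<longleftrightarrow>
     countable \<Gamma> \<and> \<Gamma> \<subseteq> cut_vertices X \<and>
     (\<forall>c\<in>\<Gamma>. \<forall>d\<in>\<Gamma>. \<not> cuts_cross c d) \<and>
     (\<forall>g\<in>cut_vertices X - \<Gamma>. \<exists>c\<in>\<Gamma>. cuts_cross g c) \<and>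
     (\<forall>g\<in>cut_vertices X - \<Gamma>. finite {c\<in>\<Gamma>. cuts_cross g c})"

text \<open>Adjacency in \<Gamma> (edge of the adjacency graph A(\<Gamma>); simplicial, so distinct).\<close>
definition pants_adjacent :: "'a topology \<Rightarrow> 'a set set set \<Rightarrow> 'a set set \<Rightarrow> 'a set set \<Rightarrow> bool" where
  "pants_adjacent X \<Gamma> c d \<longleftrightarrow> c \<in> \<Gamma> \<and> d \<in> \<Gamma> \<and> c \<noteq> d \<and>
     (\<exists>g\<in>cut_vertices X. {e\<in>\<Gamma>. cuts_cross g e} = {c, d})"

end

theory Submission
  imports Defs
begin

text \<open>Since distinct non-peripheral cuts cross exactly when they are not joined by an edge,
  a graph isomorphism of complexes of cuts preserves crossing in both directions. Being a pants
  decomposition and adjacency inside one are phrased purely in terms of crossing, so both are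
  transported along any crossing-preserving bijection of cuts; no topology is involved.\<close>

lemma nonperipheral_cut_not_cross_self:
  assumes "c \<in> cut_vertices X"
  shows "\<not> cuts_cross c c"
proof -
  from assms obtain U V where "c = {U, V}" "U \<inter> V = {}"
    unfolding cut_vertices_def nonperipheral_cut_def by blast
  then show ?thesis
    unfolding cuts_cross_def by blast
qed

lemma cuts_cross_iff_not_cut_edge:
  assumes "c \<in> cut_vertices X" and "d \<in> cut_vertices X"
  shows "cuts_cross c d \<longleftrightarrow> c \<noteq> d \<and> \<not> cut_edge X c d"
  using assms nonperipheral_cut_not_cross_self[OF assms(1)] unfolding cut_edge_def by auto

lemma cut_complex_iso_cuts_cross_iff:
  assumes iso: "cut_complex_iso X Y \<Phi>"
    and c: "c \<in> cut_vertices X" and d: "d \<in> cut_vertices X"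
  shows "cuts_cross (\<Phi> c) (\<Phi> d) \<longleftrightarrow> cuts_cross c d"
proof -
  have bij: "bij_betw \<Phi> (cut_vertices X) (cut_vertices Y)"
    and edge: "cut_edge Y (\<Phi> c) (\<Phi> d) \<longleftrightarrow> cut_edge X c d"
    using iso c d unfolding cut_complex_iso_def by auto
  have "\<Phi> c \<in> cut_vertices Y" "\<Phi> d \<in> cut_vertices Y"
    using bij c d by (auto dest: bij_betw_apply)
  moreover have "\<Phi> c = \<Phi> d \<longleftrightarrow> c = d"
    using bij c d by (auto simp: bij_betw_def inj_on_def)
  ultimately show ?thesis
    using edge c d by (simp add: cuts_cross_iff_not_cut_edge)
qed

context
  fixes X :: "'a topology" and Y :: "'b topology" and \<Phi> :: "'a set set \<Rightarrow> 'b set set"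
  assumes bij: "bij_betw \<Phi> (cut_vertices X) (cut_vertices Y)"
    and cross: "\<And>c d. c \<in> cut_vertices X \<Longrightarrow> d \<in> cut_vertices X \<Longrightarrow>
                  cuts_cross (\<Phi> c) (\<Phi> d) \<longleftrightarrow> cuts_cross c d"
begin

lemma crossing_cuts_image:
  assumes "\<Gamma> \<subseteq> cut_vertices X" and "g \<in> cut_vertices X"
  shows "{e \<in> \<Phi> ` \<Gamma>. cuts_cross (\<Phi> g) e} = \<Phi> ` {e \<in> \<Gamma>. cuts_cross g e}"
  using assms cross by auto

lemma cut_vertices_diff_image:
  assumes "h \<in> cut_vertices Y - \<Phi> ` \<Gamma>"
  obtains g where "g \<in> cut_vertices X - \<Gamma>" and "h = \<Phi> g"
proof -
  from assms obtain g where "g \<in> cut_vertices X" "h = \<Phi> g"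
    using bij unfolding bij_betw_def by blast
  with assms that show thesis by blast
qed

lemma pants_decomposition_image:
  assumes "pants_decomposition X \<Gamma>"
  shows "pants_decomposition Y (\<Phi> ` \<Gamma>)"
proof -
  have sub: "\<Gamma> \<subseteq> cut_vertices X"
    and comp: "\<forall>c\<in>\<Gamma>. \<forall>d\<in>\<Gamma>. \<not> cuts_cross c d"
    and meets: "\<forall>g\<in>cut_vertices X - \<Gamma>. \<exists>c\<in>\<Gamma>. cuts_cross g c"
    and fin: "\<forall>g\<in>cut_vertices X - \<Gamma>. finite {c\<in>\<Gamma>. cuts_cross g c}"
    using assms unfolding pants_decomposition_def by auto
  show ?thesis
    unfolding pants_decomposition_def
  proof (intro conjI ballI)
    show "countable (\<Phi> ` \<Gamma>)"
      using assms by (simp add: pants_decomposition_def)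
    show "\<Phi> ` \<Gamma> \<subseteq> cut_vertices Y"
      using sub bij by (auto dest: bij_betw_apply)
  next
    fix c d assume "c \<in> \<Phi> ` \<Gamma>" "d \<in> \<Phi> ` \<Gamma>"
    then obtain c' d' where "c' \<in> \<Gamma>" "d' \<in> \<Gamma>" "c = \<Phi> c'" "d = \<Phi> d'"
      by blast
    then show "\<not> cuts_cross c d"
      using comp cross[of c' d'] sub by auto
  next
    fix h assume "h \<in> cut_vertices Y - \<Phi> ` \<Gamma>"
    then obtain g where g: "g \<in> cut_vertices X - \<Gamma>" "h = \<Phi> g"
      by (rule cut_vertices_diff_image)
    then obtain c where "c \<in> \<Gamma>" "cuts_cross g c"
      using meets by blast
    then show "\<exists>c\<in>\<Phi> ` \<Gamma>. cuts_cross h c"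
      using g cross sub by blast
  next
    fix h assume "h \<in> cut_vertices Y - \<Phi> ` \<Gamma>"
    then obtain g where g: "g \<in> cut_vertices X - \<Gamma>" "h = \<Phi> g"
      by (rule cut_vertices_diff_image)
    then show "finite {c\<in>\<Phi> ` \<Gamma>. cuts_cross h c}"
      using fin sub by (simp add: crossing_cuts_image)
  qed
qed

lemma pants_adjacent_image_iff:
  assumes sub: "\<Gamma> \<subseteq> cut_vertices X" and c: "c \<in> \<Gamma>" and d: "d \<in> \<Gamma>"
  shows "pants_adjacent Y (\<Phi> ` \<Gamma>) (\<Phi> c) (\<Phi> d) \<longleftrightarrow> pants_adjacent X \<Gamma> c d"
proof -
  have inj: "inj_on \<Phi> \<Gamma>"
    using bij sub by (auto simp: bij_betw_def intro: inj_on_subset)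
  have witness_iff: "{e \<in> \<Phi> ` \<Gamma>. cuts_cross (\<Phi> g) e} = {\<Phi> c, \<Phi> d}
                       \<longleftrightarrow> {e \<in> \<Gamma>. cuts_cross g e} = {c, d}"
    if "g \<in> cut_vertices X" for g
    using inj_on_image_eq_iff[OF inj, of "{e \<in> \<Gamma>. cuts_cross g e}" "{c, d}"] c d
    by (simp add: crossing_cuts_image[OF sub that])
  have surj: "\<Phi> ` cut_vertices X = cut_vertices Y"
    using bij by (rule bij_betw_imp_surj_on)
  have witnesses_iff: "(\<exists>h\<in>cut_vertices Y. {e \<in> \<Phi> ` \<Gamma>. cuts_cross h e} = {\<Phi> c, \<Phi> d})
          \<longleftrightarrow> (\<exists>g\<in>cut_vertices X. {e \<in> \<Gamma>. cuts_cross g e} = {c, d})"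
    unfolding surj[symmetric] using witness_iff by simp
  have distinct_iff: "\<Phi> c = \<Phi> d \<longleftrightarrow> c = d"
    using inj c d by (auto simp: inj_on_def)
  show ?thesis
    using c d unfolding pants_adjacent_def witnesses_iff distinct_iff by simp
qed

end

theorem mainTheorem6:
  fixes X :: "'a topology" and Y :: "'b topology" and \<Phi> :: "'a set set \<Rightarrow> 'b set set"
  assumes "stone_space X" and "stone_space Y" and "cut_complex_iso X Y \<Phi>"
  shows "\<forall>\<Gamma>. pants_decomposition X \<Gamma> \<longrightarrow>
           pants_decomposition Y (\<Phi> ` \<Gamma>) \<and>
           bij_betw \<Phi> \<Gamma> (\<Phi> ` \<Gamma>) \<and>
           (\<forall>c\<in>\<Gamma>. \<forall>d\<in>\<Gamma>. pants_adjacent X \<Gamma> c d \<longleftrightarrow> pants_adjacent Y (\<Phi> ` \<Gamma>) (\<Phi> c) (\<Phi> d))"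
proof (intro allI impI conjI)
  fix \<Gamma> assume pants: "pants_decomposition X \<Gamma>"
  have bij: "bij_betw \<Phi> (cut_vertices X) (cut_vertices Y)"
    using assms(3) unfolding cut_complex_iso_def by blast
  note cross = cut_complex_iso_cuts_cross_iff[OF assms(3)]
  have sub: "\<Gamma> \<subseteq> cut_vertices X"
    using pants unfolding pants_decomposition_def by blast
  show "pants_decomposition Y (\<Phi> ` \<Gamma>)"
    using pants_decomposition_image[OF bij cross pants] .
  show "bij_betw \<Phi> \<Gamma> (\<Phi> ` \<Gamma>)"
    using bij sub by (auto simp: bij_betw_def intro: inj_on_subset)
  show "\<forall>c\<in>\<Gamma>. \<forall>d\<in>\<Gamma>. pants_adjacent X \<Gamma> c d \<longleftrightarrow> pants_adjacent Y (\<Phi> ` \<Gamma>) (\<Phi> c) (\<Phi> d)"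
    using pants_adjacent_image_iff[OF bij cross sub] by blast
qed

end
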